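(* Let $N,\alpha\in\mathbb{N}$ and let $a_1,\dots,a_\alpha$ be complex numbers. Define $a_{n,j}:=a_j$ if $n\le N$ and $j\le\alpha$, and $a_{n,j}:=0$ otherwise ($n,j\ge1$). Then $$(1+a_1+\cdots+a_\alpha)^N=1+\sum_{k=1}^{\alpha N}\ \sum_{L\vdash k}\frac{1}{C_{stb}(L)}\sum_{\sigma\in S_{\ell(L)}}\operatorname{sign}(\sigma)\,\mathbb{A}_{\sigma,L}\big(\{a_{n,j}\}_{n,j\ge1}\big).$$
   Context: $L\vdash k$ means $L=[x_1,\dots,x_m]$ is a partition of $k$ (multiset of positive integers summing to $k$), $\ell(L)=m$, and $C_{stb}(L):=\prod_x(\#\{i:x_i=x\})!$ over distinct values $x$ in $L$. Writing $L=[k_1,\dots,k_m]$ with $k_1\le\cdots\le k_m$ and, for $\sigma\in S_m$ (sign denoted $\operatorname{sign}$), decomposing $\sigma$ into disjoint cycles $C_1,\dots,C_r$ (fixed points kept as length-one cycles), $\mathbb{A}_{\sigma,L}(\{a_{n,j}\}):=\prod_{t=1}^{r}\big(\sum_{n=1}^{\infty}\prod_{i\in C_t}a_{n,k_i}\big)$ (finite sums here). *)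

theory Defs
  imports Complex_Main "HOL-Library.Multiset" "HOL-Combinatorics.Combinatorics"
begin

definition partitions_of :: "nat \<Rightarrow> nat multiset set" where
  "partitions_of k = {L. (\<forall>x\<in>#L. 0 < x) \<and> sum_mset L = k}"

definition part_len :: "nat multiset \<Rightarrow> nat" where
  "part_len L = size L"

definition C_stb :: "nat multiset \<Rightarrow> nat" where
  "C_stb L = (\<Prod>x\<in>set_mset L. fact (count L x))"

text \<open>Cycles of a permutation sigma of {0..<m} (fixed points give singleton cycles);
  index i (0-based) corresponds to k_{i+1} of the sorted list.\<close>
definition perm_cycles :: "nat \<Rightarrow> (nat \<Rightarrow> nat) \<Rightarrow> nat set set" where
  "perm_cycles m \<sigma> = (\<lambda>i. orbit \<sigma> i) ` {..<m}"

definition bbA :: "(nat \<Rightarrow> nat) \<Rightarrow> nat multiset \<Rightarrow> (nat \<Rightarrow> nat \<Rightarrow> complex) \<Rightarrow> complex" where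
  "bbA \<sigma> L a = (let ks = sorted_list_of_multiset L in
     \<Prod>C\<in>perm_cycles (size L) \<sigma>. (\<Sum>n. \<Prod>i\<in>C. a (Suc n) (ks ! i)))"

end

theory Submission
  imports Defs
begin

text \<open>Expanding the product over a cycle decomposition, \<open>\<Prod>\<^sub>C \<Sum>\<^sub>n \<Prod>\<^sub>i\<^sub>\<in>\<^sub>C x n i\<close>
  is the sum over all maps f from positions to rows that are constant on the cycles of \<sigma>,
  i.e. with f \<circ> \<sigma> = f. For fixed f the signs of the permutations stabilising f cancel
  unless f is injective, so the signed sum over \<sigma> counts injective placements of the parts
  of L into rows. Forgetting the order of equal parts, every assignment of the parts to rows
  arises C_stb(L) times, and grouping the expansion of \<open>\<Prod>\<^sub>n (1 + \<Sum>\<^sub>j a\<^sub>n\<^sub>,\<^sub>j)\<close> by the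
  multiset of chosen columns gives the theorem.\<close>

text \<open>Composing with the transposition of two points with equal f-values is a
  sign-reversing involution of the stabiliser. The cancellation is argued in \<open>int\<close>, since
  x = -x does not force x = 0 in characteristic 2.\<close>
lemma sum_sign_stabilizer_int:
  fixes f :: "'i \<Rightarrow> 'b"
  assumes "finite S"
  shows "(\<Sum>\<sigma>\<in>{\<sigma>. \<sigma> permutes S \<and> (\<forall>k\<in>S. f (\<sigma> k) = f k)}. sign \<sigma>) = (if inj_on f S then 1 else 0)"
proof (cases "inj_on f S")
  case True
  have "{\<sigma>. \<sigma> permutes S \<and> (\<forall>k\<in>S. f (\<sigma> k) = f k)} = {id}"
  proof (intro equalityI subsetI)
    fix \<sigma> assume \<sigma>: "\<sigma> \<in> {\<sigma>. \<sigma> permutes S \<and> (\<forall>k\<in>S. f (\<sigma> k) = f k)}"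
    have "\<sigma> k = k" for k
      using \<sigma> True permutes_in_image[of \<sigma> S k] permutes_not_in[of \<sigma> S k]
      by (cases "k \<in> S") (auto simp: inj_on_def)
    then show "\<sigma> \<in> {id}" by auto
  qed (auto simp: permutes_id)
  then show ?thesis using True by simp
next
  case False
  let ?T = "{\<sigma>. \<sigma> permutes S \<and> (\<forall>k\<in>S. f (\<sigma> k) = f k)}"
  obtain i j where ij: "i \<in> S" "j \<in> S" "i \<noteq> j" "f i = f j"
    using False unfolding inj_on_def by auto
  let ?t = "transpose i j"
  have "?t permutes S" using ij by (intro permutes_swap_id)
  moreover have "f (?t k) = f k" for k using ij by (auto simp: transpose_def)
  ultimately have "(\<lambda>\<sigma>. ?t \<circ> \<sigma>) ` ?T \<subseteq> ?T" by (auto intro: permutes_compose)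
  then have swap: "bij_betw (\<lambda>\<sigma>. ?t \<circ> \<sigma>) ?T ?T"
    by (intro bij_betw_byWitness[where f' = "\<lambda>\<sigma>. ?t \<circ> \<sigma>"]) (auto simp: fun_eq_iff)
  have perm: "permutation p" if "p permutes S" for p
    using that assms by (auto simp: permutation_permutes)
  have "(\<Sum>\<sigma>\<in>?T. sign \<sigma>) = (\<Sum>\<sigma>\<in>?T. sign (?t \<circ> \<sigma>))"
    using sum.reindex_bij_betw[OF swap, of sign] by simp
  also have "\<dots> = (\<Sum>\<sigma>\<in>?T. - sign \<sigma>)"
    using ij perm \<open>?t permutes S\<close> by (intro sum.cong refl) (simp add: sign_compose sign_swap_id)
  finally show ?thesis using False by (simp add: sum_negf)
qed

lemma sum_sign_stabilizer:
  fixes f :: "'i \<Rightarrow> 'b"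
  assumes "finite S"
  shows "(\<Sum>\<sigma>\<in>{\<sigma>. \<sigma> permutes S \<and> (\<forall>k\<in>S. f (\<sigma> k) = f k)}. of_int (sign \<sigma>) :: 'a::ring_1)
    = (if inj_on f S then 1 else 0)"
  using sum_sign_stabilizer_int[OF assms, of f] by (simp flip: of_int_sum)

context
  fixes I :: "'i set" and cls :: "'i \<Rightarrow> 'i set"
  assumes self_in_cls: "\<And>i. i \<in> I \<Longrightarrow> i \<in> cls i"
    and cls_subset: "\<And>i. i \<in> I \<Longrightarrow> cls i \<subseteq> I"
    and cls_eq: "\<And>i j. i \<in> I \<Longrightarrow> j \<in> cls i \<Longrightarrow> cls j = cls i"
begin

lemma partition_on_classes: "partition_on I (cls ` I)"
proof (rule partition_onI)
  show "\<Union>(cls ` I) = I" using self_in_cls cls_subset by blast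
  show "disjnt C D" if C: "C \<in> cls ` I" and D: "D \<in> cls ` I" and "C \<noteq> D" for C D
  proof -
    obtain i j where "i \<in> I" "C = cls i" "j \<in> I" "D = cls j" using C D by blast
    then show ?thesis using \<open>C \<noteq> D\<close> cls_eq[of i] cls_eq[of j] unfolding disjnt_def by blast
  qed
  show "{} \<notin> cls ` I" using self_in_cls by blast
qed

lemma bij_betw_lift_to_classes:
  "bij_betw (\<lambda>h. restrict (\<lambda>i. h (cls i)) I) (cls ` I \<rightarrow>\<^sub>E A)
     {f \<in> I \<rightarrow>\<^sub>E A. \<forall>i\<in>I. \<forall>j\<in>cls i. f j = f i}"
proof (rule bij_betw_byWitness[where f' = "\<lambda>f. restrict (\<lambda>C. f (SOME i. i \<in> C)) (cls ` I)"])
  have some_in: "(SOME j. j \<in> cls i) \<in> cls i" if "i \<in> I" for i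
    using self_in_cls[OF that] by (rule someI)
  show "\<forall>h\<in>cls ` I \<rightarrow>\<^sub>E A.
    restrict (\<lambda>C. restrict (\<lambda>i. h (cls i)) I (SOME i. i \<in> C)) (cls ` I) = h"
  proof (intro ballI ext)
    fix h C assume h: "h \<in> cls ` I \<rightarrow>\<^sub>E A"
    show "restrict (\<lambda>C. restrict (\<lambda>i. h (cls i)) I (SOME i. i \<in> C)) (cls ` I) C = h C"
    proof (cases "C \<in> cls ` I")
      case True
      then obtain i where i: "i \<in> I" "C = cls i" by blast
      then have "cls (SOME j. j \<in> cls i) = C" "(SOME j. j \<in> cls i) \<in> I"
        using some_in[OF i(1)] cls_eq[OF i(1)] cls_subset[OF i(1)] by auto
      then show ?thesis using True i by simp
    qed (simp add: PiE_arb[OF h])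
  qed
  show "\<forall>f\<in>{f \<in> I \<rightarrow>\<^sub>E A. \<forall>i\<in>I. \<forall>j\<in>cls i. f j = f i}.
    restrict (\<lambda>i. restrict (\<lambda>C. f (SOME i. i \<in> C)) (cls ` I) (cls i)) I = f"
    using some_in by (auto simp: fun_eq_iff)
  show "(\<lambda>h. restrict (\<lambda>i. h (cls i)) I) ` (cls ` I \<rightarrow>\<^sub>E A)
    \<subseteq> {f \<in> I \<rightarrow>\<^sub>E A. \<forall>i\<in>I. \<forall>j\<in>cls i. f j = f i}"
  proof (rule image_subsetI)
    fix h assume h: "h \<in> cls ` I \<rightarrow>\<^sub>E A"
    have "restrict (\<lambda>i. h (cls i)) I j = restrict (\<lambda>i. h (cls i)) I i"
      if "i \<in> I" "j \<in> cls i" for i j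
      using that cls_subset[of i] cls_eq[of i j] by auto
    then show "restrict (\<lambda>i. h (cls i)) I \<in> {f \<in> I \<rightarrow>\<^sub>E A. \<forall>i\<in>I. \<forall>j\<in>cls i. f j = f i}"
      using h by auto
  qed
  show "(\<lambda>f. restrict (\<lambda>C. f (SOME i. i \<in> C)) (cls ` I)) `
      {f \<in> I \<rightarrow>\<^sub>E A. \<forall>i\<in>I. \<forall>j\<in>cls i. f j = f i} \<subseteq> cls ` I \<rightarrow>\<^sub>E A"
    using some_in cls_subset by fastforce
qed

lemma prod_sum_eq_sum_class_invariant:
  fixes x :: "'n \<Rightarrow> 'i \<Rightarrow> 'a::comm_semiring_1"
  assumes "finite I" "finite A"
  shows "(\<Prod>C\<in>cls ` I. \<Sum>n\<in>A. \<Prod>i\<in>C. x n i)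
    = (\<Sum>f\<in>{f \<in> I \<rightarrow>\<^sub>E A. \<forall>i\<in>I. \<forall>j\<in>cls i. f j = f i}. \<Prod>i\<in>I. x (f i) i)"
proof -
  have "(\<Prod>C\<in>cls ` I. \<Sum>n\<in>A. \<Prod>i\<in>C. x n i)
    = (\<Sum>h\<in>cls ` I \<rightarrow>\<^sub>E A. \<Prod>C\<in>cls ` I. \<Prod>i\<in>C. x (h C) i)"
    using assms by (simp add: prod_sum_PiE)
  also have "\<dots> = (\<Sum>h\<in>cls ` I \<rightarrow>\<^sub>E A. \<Prod>i\<in>I. x (h (cls i)) i)"
  proof (intro sum.cong refl)
    fix h
    have "(\<Prod>i\<in>I. x (h (cls i)) i) = (\<Prod>C\<in>cls ` I. \<Prod>i\<in>C. x (h (cls i)) i)"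
      using \<open>finite I\<close> partition_on_classes by (rule prod.partition)
    also have "\<dots> = (\<Prod>C\<in>cls ` I. \<Prod>i\<in>C. x (h C) i)"
      using cls_eq by (intro prod.cong refl) (metis imageE)
    finally show "(\<Prod>C\<in>cls ` I. \<Prod>i\<in>C. x (h C) i) = (\<Prod>i\<in>I. x (h (cls i)) i)" ..
  qed
  also have "\<dots> = (\<Sum>h\<in>cls ` I \<rightarrow>\<^sub>E A. \<Prod>i\<in>I. x (restrict (\<lambda>i. h (cls i)) I i) i)"
    by simp
  also have "\<dots> = (\<Sum>f\<in>{f \<in> I \<rightarrow>\<^sub>E A. \<forall>i\<in>I. \<forall>j\<in>cls i. f j = f i}. \<Prod>i\<in>I. x (f i) i)"
    by (rule sum.reindex_bij_betw[OF bij_betw_lift_to_classes])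
  finally show ?thesis .
qed

end

lemma orbit_invariant:
  assumes "\<sigma> permutes I" "i \<in> I" "\<forall>k\<in>I. f (\<sigma> k) = f k" "j \<in> orbit \<sigma> i"
  shows "f j = f i"
  using assms(4)
proof induction
  case (step y)
  then have "y \<in> I" using permutes_orbit_subset[OF assms(1,2)] by blast
  then show ?case using step assms(3) by simp
qed (use assms in simp)

lemma prod_sum_orbits_eq_sum_invariant:
  fixes x :: "'n \<Rightarrow> 'i \<Rightarrow> 'a::comm_semiring_1"
  assumes "\<sigma> permutes I" "finite I" "finite A"
  shows "(\<Prod>C\<in>orbit \<sigma> ` I. \<Sum>n\<in>A. \<Prod>i\<in>C. x n i)
    = (\<Sum>f\<in>{f \<in> I \<rightarrow>\<^sub>E A. \<forall>k\<in>I. f (\<sigma> k) = f k}. \<Prod>i\<in>I. x (f i) i)"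
proof -
  have "permutation \<sigma>" using assms(1,2) by (auto simp: permutation_permutes)
  have invariant_iff: "(\<forall>i\<in>I. \<forall>j\<in>orbit \<sigma> i. f j = f i) \<longleftrightarrow> (\<forall>k\<in>I. f (\<sigma> k) = f k)" for f
    using orbit_invariant[OF assms(1), of _ f] orbit.base[of \<sigma>] by blast
  have "(\<Prod>C\<in>orbit \<sigma> ` I. \<Sum>n\<in>A. \<Prod>i\<in>C. x n i)
    = (\<Sum>f\<in>{f \<in> I \<rightarrow>\<^sub>E A. \<forall>i\<in>I. \<forall>j\<in>orbit \<sigma> i. f j = f i}. \<Prod>i\<in>I. x (f i) i)"
  proof (rule prod_sum_eq_sum_class_invariant[OF _ _ _ assms(2,3)])
    show "i \<in> orbit \<sigma> i" for i
      using \<open>permutation \<sigma>\<close> by (rule permutation_self_in_orbit)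
    show "orbit \<sigma> i \<subseteq> I" if "i \<in> I" for i
      using assms(1) that by (rule permutes_orbit_subset)
    show "orbit \<sigma> j = orbit \<sigma> i" if "j \<in> orbit \<sigma> i" for i j
      using cyclic_on_orbit'[OF \<open>permutation \<sigma>\<close>] that by (rule orbit_cyclic_eq3)
  qed
  then show ?thesis by (simp only: invariant_iff)
qed

lemma sum_sign_prod_orbits:
  fixes x :: "'n \<Rightarrow> 'i \<Rightarrow> 'a::comm_ring_1"
  assumes "finite I" "finite A"
  shows "(\<Sum>\<sigma> | \<sigma> permutes I. of_int (sign \<sigma>) * (\<Prod>C\<in>orbit \<sigma> ` I. \<Sum>n\<in>A. \<Prod>i\<in>C. x n i))
    = (\<Sum>f\<in>{f \<in> I \<rightarrow>\<^sub>E A. inj_on f I}. \<Prod>i\<in>I. x (f i) i)"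
proof -
  let ?F = "I \<rightarrow>\<^sub>E A"
  let ?w = "\<lambda>f. \<Prod>i\<in>I. x (f i) i"
  have fin: "finite {\<sigma>. \<sigma> permutes I}" "finite ?F"
    using assms by (simp_all add: finite_permutations finite_PiE)
  have "(\<Sum>\<sigma> | \<sigma> permutes I. of_int (sign \<sigma>) * (\<Prod>C\<in>orbit \<sigma> ` I. \<Sum>n\<in>A. \<Prod>i\<in>C. x n i))
    = (\<Sum>\<sigma> | \<sigma> permutes I. \<Sum>f | f \<in> ?F \<and> (\<forall>k\<in>I. f (\<sigma> k) = f k). of_int (sign \<sigma>) * ?w f)"
    using assms by (intro sum.cong refl) (simp add: prod_sum_orbits_eq_sum_invariant sum_distrib_left)
  also have "\<dots> = (\<Sum>f\<in>?F. \<Sum>\<sigma> | \<sigma> permutes I \<and> (\<forall>k\<in>I. f (\<sigma> k) = f k). of_int (sign \<sigma>) * ?w f)"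
    using sum.swap_restrict[OF fin] by simp
  also have "\<dots> = (\<Sum>f\<in>?F. if inj_on f I then ?w f else 0)"
    using assms by (intro sum.cong refl) (simp flip: sum_distrib_right add: sum_sign_stabilizer)
  also have "\<dots> = (\<Sum>f\<in>{f \<in> ?F. inj_on f I}. ?w f)"
    using fin by (simp add: sum.inter_filter)
  finally show ?thesis .
qed

definition nonzero_values :: "'n set \<Rightarrow> ('n \<Rightarrow> nat) \<Rightarrow> nat multiset" where
  "nonzero_values A g = image_mset g (mset_set {n \<in> A. g n \<noteq> 0})"

text \<open>An assignment g records one term of the expansion of \<open>\<Prod>\<^sub>n\<^sub>\<in>\<^sub>A (1 + \<Sum>\<^sub>j c n j)\<close>:
  g n = j \<noteq> 0 selects c n j from the factor of row n, and g n = 0 selects 1.\<close>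
definition assignments :: "'n set \<Rightarrow> nat multiset \<Rightarrow> ('n \<Rightarrow> nat) set" where
  "assignments A L = {g \<in> extensional A. nonzero_values A g = L}"

definition assignment_weight :: "('n \<Rightarrow> nat \<Rightarrow> 'a) \<Rightarrow> 'n set \<Rightarrow> ('n \<Rightarrow> nat) \<Rightarrow> 'a::comm_monoid_mult" where
  "assignment_weight c A g = (\<Prod>n | n \<in> A \<and> g n \<noteq> 0. c n (g n))"

lemma in_nonzero_values_iff:
  assumes "finite A"
  shows "j \<in># nonzero_values A g \<longleftrightarrow> (\<exists>n\<in>A. g n \<noteq> 0 \<and> g n = j)"
  using assms unfolding nonzero_values_def by auto

lemma count_nonzero_values:
  assumes "finite A" "j \<noteq> 0"
  shows "count (nonzero_values A g) j = card {n \<in> A. g n = j}"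
proof -
  have "count (nonzero_values A g) j = card (g -` {j} \<inter> {n \<in> A. g n \<noteq> 0})"
    unfolding nonzero_values_def count_image_mset using assms by simp
  also have "g -` {j} \<inter> {n \<in> A. g n \<noteq> 0} = {n \<in> A. g n = j}" using assms by auto
  finally show ?thesis .
qed

lemma nonzero_values_upd:
  assumes "finite A" "n \<in> A" "j \<noteq> 0"
  shows "nonzero_values A (g(n := j)) = add_mset j (nonzero_values (A - {n}) g)"
proof -
  have "{k \<in> A. (g(n := j)) k \<noteq> 0} = insert n {k \<in> A - {n}. g k \<noteq> 0}" using assms by auto
  moreover have "image_mset (g(n := j)) (mset_set {k \<in> A - {n}. g k \<noteq> 0}) = nonzero_values (A - {n}) g"
    unfolding nonzero_values_def using assms by (intro image_mset_cong) auto
  ultimately show ?thesis using assms by (simp add: nonzero_values_def)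
qed

lemma assignment_weight_upd:
  assumes "finite A" "n \<in> A" "j \<noteq> 0"
  shows "assignment_weight c A (g(n := j)) = c n j * assignment_weight c (A - {n}) g"
proof -
  have "{k. k \<in> A \<and> (g(n := j)) k \<noteq> 0} = insert n {k. k \<in> A - {n} \<and> g k \<noteq> 0}" using assms by auto
  moreover have "(\<Prod>k | k \<in> A - {n} \<and> g k \<noteq> 0. c k ((g(n := j)) k)) = assignment_weight c (A - {n}) g"
    unfolding assignment_weight_def by (intro prod.cong) auto
  ultimately show ?thesis using assms by (simp add: assignment_weight_def)
qed

lemma finite_assignments:
  assumes "finite A"
  shows "finite (assignments A L)"
proof (rule finite_subset)
  show "assignments A L \<subseteq> A \<rightarrow>\<^sub>E insert 0 (set_mset L)"
  proof
    fix g assume "g \<in> assignments A L"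
    then show "g \<in> A \<rightarrow>\<^sub>E insert 0 (set_mset L)"
      using in_nonzero_values_iff[OF assms, of _ g] by (auto simp: assignments_def PiE_iff)
  qed
  show "finite (A \<rightarrow>\<^sub>E insert 0 (set_mset L))"
    using assms by (simp add: finite_PiE)
qed

lemma assignments_empty:
  assumes "finite A"
  shows "assignments A {#} = {\<lambda>n\<in>A. 0}"
proof (intro equalityI subsetI)
  fix g assume g: "g \<in> assignments A {#}"
  then have "g n = 0" if "n \<in> A" for n
    using that in_nonzero_values_iff[OF assms, of "g n" g] by (auto simp: assignments_def)
  with g show "g \<in> {\<lambda>n\<in>A. 0}"
    by (auto simp: assignments_def intro!: extensionalityI[OF _ restrict_extensional])
qed (simp add: assignments_def nonzero_values_def)

lemma C_stb_add_mset: "C_stb (add_mset j L) = (count L j + 1) * C_stb L"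
proof (cases "j \<in># L")
  case True
  have "C_stb (add_mset j L) = fact (count L j + 1) * (\<Prod>x\<in>set_mset L - {j}. fact (count L x))"
    unfolding C_stb_def using True by (simp add: prod.remove insert_absorb)
  moreover have "C_stb L = fact (count L j) * (\<Prod>x\<in>set_mset L - {j}. fact (count L x))"
    unfolding C_stb_def using True by (simp add: prod.remove)
  ultimately show ?thesis by (simp add: algebra_simps)
next
  case False
  then have "C_stb (add_mset j L) = (\<Prod>x\<in>set_mset L. fact (count (add_mset j L) x))"
    unfolding C_stb_def by (simp add: not_in_iff)
  also have "\<dots> = C_stb L"
    unfolding C_stb_def using False by (intro prod.cong) auto
  finally show ?thesis using False by (simp add: not_in_iff)
qed

lemma sum_assignments_value_at:
  fixes c :: "'n \<Rightarrow> nat \<Rightarrow> 'a::comm_semiring_1"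
  assumes "finite A" "n \<in> A" "j \<noteq> 0"
  shows "c n j * (\<Sum>g\<in>assignments (A - {n}) L. assignment_weight c (A - {n}) g)
    = (\<Sum>g\<in>{g \<in> assignments A (add_mset j L). g n = j}. assignment_weight c A g)"
proof -
  have bij: "bij_betw (\<lambda>g. g(n := j)) (assignments (A - {n}) L) {g \<in> assignments A (add_mset j L). g n = j}"
  proof (rule bij_betw_byWitness[where f' = "\<lambda>g. g(n := undefined)"])
    show "\<forall>g\<in>assignments (A - {n}) L. (g(n := j))(n := undefined) = g"
      by (auto simp: assignments_def extensional_def)
    show "\<forall>g\<in>{g \<in> assignments A (add_mset j L). g n = j}. (g(n := undefined))(n := j) = g"
      by auto
    show "(\<lambda>g. g(n := j)) ` assignments (A - {n}) L \<subseteq> {g \<in> assignments A (add_mset j L). g n = j}"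
      using assms by (auto simp: assignments_def extensional_def nonzero_values_upd)
    show "(\<lambda>g. g(n := undefined)) ` {g \<in> assignments A (add_mset j L). g n = j} \<subseteq> assignments (A - {n}) L"
    proof (rule image_subsetI)
      fix g assume g: "g \<in> {g \<in> assignments A (add_mset j L). g n = j}"
      then have "g = (g(n := undefined))(n := j)" by auto
      then have "add_mset j L = add_mset j (nonzero_values (A - {n}) (g(n := undefined)))"
        using g assms nonzero_values_upd[OF assms, of "g(n := undefined)"]
        by (simp add: assignments_def)
      then show "g(n := undefined) \<in> assignments (A - {n}) L"
        using g by (auto simp: assignments_def extensional_def)
    qed
  qed
  have "c n j * (\<Sum>g\<in>assignments (A - {n}) L. assignment_weight c (A - {n}) g)
    = (\<Sum>g\<in>assignments (A - {n}) L. assignment_weight c A (g(n := j)))"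
    using assms by (simp add: sum_distrib_left assignment_weight_upd)
  also have "\<dots> = (\<Sum>g\<in>{g \<in> assignments A (add_mset j L). g n = j}. assignment_weight c A g)"
    by (rule sum.reindex_bij_betw[OF bij])
  finally show ?thesis .
qed

text \<open>Double counting of the pairs (n, g) with g n = j: every g with nonzero values
  add_mset j L takes the value j exactly count L j + 1 times.\<close>
lemma sum_assignments_add_mset:
  fixes c :: "'n \<Rightarrow> nat \<Rightarrow> 'a::comm_semiring_1"
  assumes "finite A" "j \<noteq> 0"
  shows "(\<Sum>n\<in>A. c n j * (\<Sum>g\<in>assignments (A - {n}) L. assignment_weight c (A - {n}) g))
    = of_nat (count L j + 1) * (\<Sum>g\<in>assignments A (add_mset j L). assignment_weight c A g)"
proof -
  let ?G = "assignments A (add_mset j L)"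
  have "(\<Sum>n\<in>A. c n j * (\<Sum>g\<in>assignments (A - {n}) L. assignment_weight c (A - {n}) g))
    = (\<Sum>n\<in>A. \<Sum>g\<in>?G. if g n = j then assignment_weight c A g else 0)"
    using assms finite_assignments[OF assms(1)]
    by (intro sum.cong refl) (simp add: sum_assignments_value_at sum.inter_filter)
  also have "\<dots> = (\<Sum>g\<in>?G. \<Sum>n\<in>A. if g n = j then assignment_weight c A g else 0)"
    by (rule sum.swap)
  also have "\<dots> = (\<Sum>g\<in>?G. of_nat (count L j + 1) * assignment_weight c A g)"
  proof (intro sum.cong refl)
    fix g assume "g \<in> ?G"
    then have "card {n \<in> A. g n = j} = count L j + 1"
      using count_nonzero_values[OF assms, of g] by (simp add: assignments_def)
    then show "(\<Sum>n\<in>A. if g n = j then assignment_weight c A g else 0)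
      = of_nat (count L j + 1) * assignment_weight c A g"
      using assms(1) by (simp flip: sum.inter_filter)
  qed
  finally show ?thesis by (simp add: sum_distrib_left)
qed

lemma sum_inj_PiE_insert:
  fixes x :: "'n \<Rightarrow> 'i \<Rightarrow> 'a::comm_semiring_1"
  assumes "finite I" "i \<notin> I" "finite A"
  shows "(\<Sum>f\<in>{f \<in> insert i I \<rightarrow>\<^sub>E A. inj_on f (insert i I)}. \<Prod>k\<in>insert i I. x (f k) k)
    = (\<Sum>n\<in>A. x n i * (\<Sum>f\<in>{f \<in> I \<rightarrow>\<^sub>E A - {n}. inj_on f I}. \<Prod>k\<in>I. x (f k) k))"
proof -
  let ?S = "SIGMA n:A. {f \<in> I \<rightarrow>\<^sub>E A - {n}. inj_on f I}"
  let ?T = "{f \<in> insert i I \<rightarrow>\<^sub>E A. inj_on f (insert i I)}"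
  have bij: "bij_betw (\<lambda>(n, f). f(i := n)) ?S ?T"
  proof (rule bij_betw_byWitness[where f' = "\<lambda>g. (g i, g(i := undefined))"])
    show "\<forall>p\<in>?S. (\<lambda>g. (g i, g(i := undefined))) ((\<lambda>(n, f). f(i := n)) p) = p"
      using assms(2) by (auto simp: fun_eq_iff PiE_iff extensional_def)
    show "\<forall>g\<in>?T. (\<lambda>(n, f). f(i := n)) (g i, g(i := undefined)) = g"
      by simp
    show "(\<lambda>(n, f). f(i := n)) ` ?S \<subseteq> ?T"
    proof -
      have "f(i := n) \<in> ?T" if "n \<in> A" "f \<in> I \<rightarrow>\<^sub>E A - {n}" "inj_on f I" for n f
      proof -
        have "inj_on (f(i := n)) I" using \<open>inj_on f I\<close> assms(2) by (simp add: inj_on_def)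
        then show ?thesis using that assms(2) by (auto simp: PiE_iff extensional_def)
      qed
      then show ?thesis by auto
    qed
    show "(\<lambda>g. (g i, g(i := undefined))) ` ?T \<subseteq> ?S"
    proof (rule image_subsetI)
      fix g assume g: "g \<in> ?T"
      then have "inj_on (g(i := undefined)) I" using assms(2) by (simp add: inj_on_def)
      then show "(g i, g(i := undefined)) \<in> ?S" using g assms(2)
        by (auto simp: PiE_iff extensional_def image_iff)
    qed
  qed
  have "(\<Sum>n\<in>A. x n i * (\<Sum>f\<in>{f \<in> I \<rightarrow>\<^sub>E A - {n}. inj_on f I}. \<Prod>k\<in>I. x (f k) k))
    = (\<Sum>(n, f)\<in>?S. x n i * (\<Prod>k\<in>I. x (f k) k))"
    using assms by (simp add: sum_distrib_left sum.Sigma finite_PiE)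
  also have "\<dots> = (\<Sum>(n, f)\<in>?S. \<Prod>k\<in>insert i I. x ((f(i := n)) k) k)"
    using assms by (intro sum.cong refl) (auto intro!: prod.cong arg_cong[where f = "(*) _"])
  also have "\<dots> = (\<Sum>f\<in>?T. \<Prod>k\<in>insert i I. x (f k) k)"
    using sum.reindex_bij_betw[OF bij, of "\<lambda>f. \<Prod>k\<in>insert i I. x (f k) k"]
    by (simp add: case_prod_beta')
  finally show ?thesis ..
qed

lemma sum_inj_eq_C_stb_sum_assignments:
  fixes c :: "'n \<Rightarrow> nat \<Rightarrow> 'a::comm_semiring_1" and w :: "'i \<Rightarrow> nat"
  assumes "finite I" "finite A" "\<forall>i\<in>I. w i \<noteq> 0"
  shows "(\<Sum>f\<in>{f \<in> I \<rightarrow>\<^sub>E A. inj_on f I}. \<Prod>i\<in>I. c (f i) (w i))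
    = of_nat (C_stb (image_mset w (mset_set I)))
      * (\<Sum>g\<in>assignments A (image_mset w (mset_set I)). assignment_weight c A g)"
  using assms
proof (induction I arbitrary: A rule: finite_induct)
  case empty
  have "{f \<in> {} \<rightarrow>\<^sub>E A. inj_on f {}} = {\<lambda>_. undefined}" by auto
  then show ?case
    using assignments_empty[OF empty.prems(1)] by (simp add: C_stb_def assignment_weight_def)
next
  case (insert i I)
  let ?M = "image_mset w (mset_set I)"
  let ?S = "\<lambda>A L. \<Sum>g\<in>assignments A L. assignment_weight c A g"
  have "(\<Sum>f\<in>{f \<in> insert i I \<rightarrow>\<^sub>E A. inj_on f (insert i I)}. \<Prod>k\<in>insert i I. c (f k) (w k))
    = (\<Sum>n\<in>A. c n (w i) * (\<Sum>f\<in>{f \<in> I \<rightarrow>\<^sub>E A - {n}. inj_on f I}. \<Prod>k\<in>I. c (f k) (w k)))"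
    using insert.hyps insert.prems(1) by (rule sum_inj_PiE_insert)
  also have "\<dots> = of_nat (C_stb ?M) * (\<Sum>n\<in>A. c n (w i) * ?S (A - {n}) ?M)"
    using insert.IH insert.prems by (simp add: sum_distrib_left mult.left_commute)
  also have "\<dots> = of_nat (C_stb ?M) * of_nat (count ?M (w i) + 1) * ?S A (add_mset (w i) ?M)"
    using insert.prems by (simp add: sum_assignments_add_mset mult.assoc)
  also have "\<dots> = of_nat (C_stb (add_mset (w i) ?M)) * ?S A (add_mset (w i) ?M)"
    by (simp add: C_stb_add_mset algebra_simps)
  finally show ?case
    using insert.hyps by simp
qed

lemma sum_sign_prod_orbits_eq_C_stb:
  fixes c :: "'n \<Rightarrow> nat \<Rightarrow> 'a::comm_ring_1" and w :: "'i \<Rightarrow> nat"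
  assumes "finite I" "finite A" "\<forall>i\<in>I. w i \<noteq> 0"
  shows "(\<Sum>\<sigma> | \<sigma> permutes I. of_int (sign \<sigma>) * (\<Prod>C\<in>orbit \<sigma> ` I. \<Sum>n\<in>A. \<Prod>i\<in>C. c n (w i)))
    = of_nat (C_stb (image_mset w (mset_set I)))
      * (\<Sum>g\<in>assignments A (image_mset w (mset_set I)). assignment_weight c A g)"
  using sum_sign_prod_orbits[OF assms(1,2), of "\<lambda>n i. c n (w i)"]
    sum_inj_eq_C_stb_sum_assignments[OF assms]
  by simp

lemma prod_one_plus_sum_eq_sum_assignment_weight:
  fixes c :: "'n \<Rightarrow> nat \<Rightarrow> 'a::comm_semiring_1"
  assumes "finite A" "finite J" "0 \<notin> J"
  shows "(\<Prod>n\<in>A. 1 + (\<Sum>j\<in>J. c n j)) = (\<Sum>g\<in>A \<rightarrow>\<^sub>E insert 0 J. assignment_weight c A g)"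
proof -
  have one_plus: "1 + (\<Sum>j\<in>J. c n j) = (\<Sum>j\<in>insert 0 J. if j = 0 then 1 else c n j)" for n
  proof -
    have "(\<Sum>j\<in>J. if j = 0 then 1 else c n j) = (\<Sum>j\<in>J. c n j)"
      using assms(3) by (intro sum.cong) auto
    then show ?thesis using assms(2,3) by simp
  qed
  have "(\<Prod>n\<in>A. 1 + (\<Sum>j\<in>J. c n j))
    = (\<Sum>g\<in>A \<rightarrow>\<^sub>E insert 0 J. \<Prod>n\<in>A. if g n = 0 then 1 else c n (g n))"
    unfolding one_plus
    using prod_sum_PiE[OF assms(1), of "\<lambda>_. insert 0 J" "\<lambda>n j. if j = 0 then 1 else c n j"] assms(2)
    by simp
  also have "\<dots> = (\<Sum>g\<in>A \<rightarrow>\<^sub>E insert 0 J. assignment_weight c A g)"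
    unfolding assignment_weight_def prod.inter_filter[OF assms(1)]
    by (intro sum.cong prod.cong) auto
  finally show ?thesis .
qed

lemma finite_partitions_of: "finite (partitions_of k)"
proof (rule finite_subset)
  show "partitions_of k \<subseteq> (\<Union>m\<le>k. multisets_of_size {1..k} m)"
  proof
    fix L assume "L \<in> partitions_of k"
    then have pos: "\<forall>x\<in>#L. 0 < x" and sum: "sum_mset L = k" by (auto simp: partitions_of_def)
    have "x \<le> k" if "x \<in># L" for x
      using sum_mset.remove[OF that] sum by simp
    moreover have "size L \<le> k"
    proof -
      have "size L = (\<Sum>x\<in>#L. 1)" by (rule size_eq_sum_mset)
      also have "\<dots> \<le> (\<Sum>x\<in>#L. x)" using pos by (intro sum_mset_mono) auto
      finally show ?thesis using sum by simp
    qed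
    ultimately show "L \<in> (\<Union>m\<le>k. multisets_of_size {1..k} m)"
      using pos by (auto simp: multisets_of_size_def)
  qed
  show "finite (\<Union>m\<le>k. multisets_of_size {1..k} m)" by auto
qed

lemma partitions_of_0: "partitions_of 0 = {{#}}"
proof -
  have "L = {#}" if "\<forall>x\<in>#L. 0 < x" "\<forall>x\<in>#L. x = 0" for L :: "nat multiset"
    using that by (cases L) auto
  then show ?thesis by (auto simp: partitions_of_def)
qed
lemma prod_one_plus_sum_eq_sum_partitions:
  fixes c :: "'n \<Rightarrow> nat \<Rightarrow> 'a::comm_semiring_1"
  assumes "finite A" and vanish: "\<And>n j. n \<in> A \<Longrightarrow> \<alpha> < j \<Longrightarrow> c n j = 0"
  shows "(\<Prod>n\<in>A. 1 + (\<Sum>j=1..\<alpha>. c n j))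
    = 1 + (\<Sum>k=1..\<alpha> * card A. \<Sum>L\<in>partitions_of k. \<Sum>g\<in>assignments A L. assignment_weight c A g)"
proof -
  let ?G = "A \<rightarrow>\<^sub>E {0..\<alpha>}"
  let ?nz = "nonzero_values A" and ?W = "assignment_weight c A"
  have "finite ?G" using assms(1) by (simp add: finite_PiE)
  have pos: "\<forall>x\<in>#?nz g. 0 < x" for g
    using in_nonzero_values_iff[OF assms(1)] by auto
  have bound: "sum_mset (?nz g) \<le> \<alpha> * card A" if "g \<in> ?G" for g
  proof -
    have "sum_mset (?nz g) = (\<Sum>n | n \<in> A \<and> g n \<noteq> 0. g n)"
      by (simp add: nonzero_values_def sum_unfold_sum_mset)
    also have "\<dots> \<le> (\<Sum>n\<in>A. g n)"
      using assms(1) by (intro sum_mono2) auto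
    also have "\<dots> \<le> card A * \<alpha>"
      using that sum_bounded_above[of A g \<alpha>] by (simp add: PiE_iff)
    finally show ?thesis by (simp add: mult.commute)
  qed
  have fibre: "(\<Sum>g | g \<in> ?G \<and> ?nz g = L. ?W g) = (\<Sum>g\<in>assignments A L. ?W g)" for L
  proof (rule sum.mono_neutral_left)
    show "finite (assignments A L)" by (rule finite_assignments[OF assms(1)])
    show "{g. g \<in> ?G \<and> ?nz g = L} \<subseteq> assignments A L"
      by (auto simp: assignments_def PiE_def)
    show "\<forall>g\<in>assignments A L - {g. g \<in> ?G \<and> ?nz g = L}. ?W g = 0"
    proof
      fix g assume g: "g \<in> assignments A L - {g. g \<in> ?G \<and> ?nz g = L}"
      then obtain n where "n \<in> A" "\<alpha> < g n"
        by (auto simp: assignments_def PiE_iff not_le)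
      then show "?W g = 0"
        unfolding assignment_weight_def using assms by (intro prod_zero) auto
    qed
  qed
  have "(\<Prod>n\<in>A. 1 + (\<Sum>j=1..\<alpha>. c n j)) = (\<Sum>g\<in>?G. ?W g)"
    using prod_one_plus_sum_eq_sum_assignment_weight[OF assms(1), of "{1..\<alpha>}" c]
    by (simp add: atLeastAtMost_insertL)
  also have "\<dots> = (\<Sum>k\<in>{0..\<alpha> * card A}. \<Sum>g | g \<in> ?G \<and> sum_mset (?nz g) = k. ?W g)"
    using \<open>finite ?G\<close> bound by (intro sum.group[symmetric]) auto
  also have "\<dots> = (\<Sum>k\<in>{0..\<alpha> * card A}. \<Sum>L\<in>partitions_of k. \<Sum>g\<in>assignments A L. ?W g)"
  proof (intro sum.cong refl)
    fix k
    have "(\<Sum>g | g \<in> ?G \<and> sum_mset (?nz g) = k. ?W g)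
      = (\<Sum>L\<in>partitions_of k. \<Sum>g | g \<in> {g \<in> ?G. sum_mset (?nz g) = k} \<and> ?nz g = L. ?W g)"
      using \<open>finite ?G\<close> pos
      by (intro sum.group[symmetric] finite_partitions_of) (auto simp: partitions_of_def)
    also have "\<dots> = (\<Sum>L\<in>partitions_of k. \<Sum>g\<in>assignments A L. ?W g)"
      unfolding fibre[symmetric] by (intro sum.cong) (auto simp: partitions_of_def)
    finally show "(\<Sum>g | g \<in> ?G \<and> sum_mset (?nz g) = k. ?W g)
      = (\<Sum>L\<in>partitions_of k. \<Sum>g\<in>assignments A L. ?W g)" .
  qed
  also have "\<dots> = 1 + (\<Sum>k=1..\<alpha> * card A. \<Sum>L\<in>partitions_of k. \<Sum>g\<in>assignments A L. ?W g)"
    using assignments_empty[OF assms(1)]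
    by (simp add: sum.atLeast_Suc_atMost partitions_of_0 assignment_weight_def)
  finally show ?thesis .
qed

lemma bbA_eq_finite_sum:
  assumes "\<sigma> permutes {..<size L}" and vanish: "\<And>n j. N \<le> n \<Longrightarrow> a (Suc n) j = 0"
  shows "bbA \<sigma> L a
    = (\<Prod>C\<in>orbit \<sigma> ` {..<size L}. \<Sum>n<N. \<Prod>i\<in>C. a (Suc n) (sorted_list_of_multiset L ! i))"
proof -
  have "permutation \<sigma>" using assms(1) by (auto simp: permutation_permutes)
  have "(\<Sum>n. \<Prod>i\<in>orbit \<sigma> i. a (Suc n) (ks ! i)) = (\<Sum>n<N. \<Prod>i\<in>orbit \<sigma> i. a (Suc n) (ks ! i))"
    for i and ks :: "nat list"
  proof (rule suminf_finite)
    have "finite (orbit \<sigma> i)"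
      using \<open>permutation \<sigma>\<close> by (intro finite_orbit permutation_self_in_orbit)
    then show "(\<Prod>i\<in>orbit \<sigma> i. a (Suc n) (ks ! i)) = 0" if "n \<notin> {..<N}" for n
      using that vanish orbit_nonempty[of \<sigma> i] by (intro prod_zero) auto
  qed simp
  then show ?thesis
    unfolding bbA_def perm_cycles_def Let_def by (intro prod.cong refl) auto
qed

lemma bbA_sum_eq_sum_assignments:
  fixes a :: "nat \<Rightarrow> nat \<Rightarrow> complex"
  assumes "L \<in> partitions_of k" and vanish: "\<And>n j. N \<le> n \<Longrightarrow> a (Suc n) j = 0"
  shows "1 / of_nat (C_stb L) * (\<Sum>\<sigma> | \<sigma> permutes {..<part_len L}. of_int (sign \<sigma>) * bbA \<sigma> L a)
    = (\<Sum>g\<in>assignments {..<N} L. assignment_weight (\<lambda>n. a (Suc n)) {..<N} g)"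
proof -
  define ks where "ks = sorted_list_of_multiset L"
  have len: "length ks = size L"
    unfolding ks_def by (metis mset_sorted_list_of_multiset size_mset)
  have L_eq: "image_mset (nth ks) (mset_set {..<size L}) = L"
    unfolding len[symmetric] mset_set_upto_eq_mset_upto mset_map[symmetric] map_nth
    by (simp add: ks_def)
  have "ks ! i \<in># L" if "i < size L" for i
    using that nth_mem[of i ks] len by (simp add: ks_def)
  then have pos: "\<forall>i\<in>{..<size L}. ks ! i \<noteq> 0"
    using assms(1) by (auto simp: partitions_of_def)
  have "(\<Sum>\<sigma> | \<sigma> permutes {..<part_len L}. of_int (sign \<sigma>) * bbA \<sigma> L a)
    = (\<Sum>\<sigma> | \<sigma> permutes {..<size L}. of_int (sign \<sigma>)
        * (\<Prod>C\<in>orbit \<sigma> ` {..<size L}. \<Sum>n<N. \<Prod>i\<in>C. a (Suc n) (ks ! i)))"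
    unfolding part_len_def ks_def using vanish by (intro sum.cong refl) (simp add: bbA_eq_finite_sum)
  also have "\<dots> = of_nat (C_stb L) * (\<Sum>g\<in>assignments {..<N} L. assignment_weight (\<lambda>n. a (Suc n)) {..<N} g)"
    using sum_sign_prod_orbits_eq_C_stb[of "{..<size L}" "{..<N}" "nth ks" "\<lambda>n. a (Suc n)"] pos
    by (simp add: L_eq)
  finally show ?thesis by (simp add: C_stb_def)
qed

theorem mainTheorem4:
  fixes N \<alpha> :: nat and a :: "nat \<Rightarrow> complex" and aa :: "nat \<Rightarrow> nat \<Rightarrow> complex"
  assumes "\<And>n j. aa n j = (if 1 \<le> n \<and> n \<le> N \<and> 1 \<le> j \<and> j \<le> \<alpha> then a j else 0)"
  shows "(1 + (\<Sum>j=1..\<alpha>. a j)) ^ N =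
    1 + (\<Sum>k=1..\<alpha> * N. \<Sum>L\<in>partitions_of k.
           (1 / of_nat (C_stb L)) *
           (\<Sum>\<sigma>\<in>{\<sigma>. \<sigma> permutes {..<part_len L}}. of_int (sign \<sigma>) * bbA \<sigma> L aa))"
proof -
  let ?c = "\<lambda>n. aa (Suc n)"
  have "(1 + (\<Sum>j=1..\<alpha>. a j)) ^ N = (\<Prod>n<N. 1 + (\<Sum>j=1..\<alpha>. ?c n j))"
    using assms by simp
  also have "\<dots> = 1 + (\<Sum>k=1..\<alpha> * N. \<Sum>L\<in>partitions_of k. \<Sum>g\<in>assignments {..<N} L. assignment_weight ?c {..<N} g)"
    using prod_one_plus_sum_eq_sum_partitions[of "{..<N}" \<alpha> ?c] assms by simp
  also have "\<dots> = 1 + (\<Sum>k=1..\<alpha> * N. \<Sum>L\<in>partitions_of k.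
           (1 / of_nat (C_stb L)) *
           (\<Sum>\<sigma>\<in>{\<sigma>. \<sigma> permutes {..<part_len L}}. of_int (sign \<sigma>) * bbA \<sigma> L aa))"
    using bbA_sum_eq_sum_assignments[where a = aa and N = N] assms by simp
  finally show ?thesis .
qed

end
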